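(* Consider the two-player treatment model described in the context, and suppose that: (a) $P_j^1-P_j^0>0$ almost surely for $j=1,2$; (b) $P_j^0,P_j^1$ ($j=1,2$) are identified, and the conditional CDF $H(v_1,v_2\mid x)$ and density $h(v_1,v_2\mid x)$ of $V$ given $X=x$ are identified; (c) for all $(d_1,d_2)\in\{0,1\}^2$, $Z=(Z_1,Z_2)$ is excluded from the structural functions $\mu_j^{(d_1,d_2)}$ and is independent of $(\varepsilon,U^{(d_1,d_2)})$ given $X$; (d) for $j=1,2$, $Z_j$ contains a player-specific continuous variable such that $\pi_j^0(W_j)$ and $\pi_j^1(W_j)$ are non-degenerate and continuously distributed given $X$; (e) there exist a constant $\lambda\in[0,1]$ and an unobserved random variable $\epsilon\sim$ Uniform$[0,1]$, independent of $(W,\varepsilon,U^{(d_1,d_2)})$ for all $(d_1,d_2)$, such that $D=(0,0)$ if and only if $V\in\mathcal V^{(0,0)}_{\mathrm{uni}}(\mathbf P)$ or ($V\in\mathcal V_{\mathrm{mul}}(\mathbf P)$ and $\epsilon\le\lambda$); and (f) $\lambda$ is identified (known). Fix $x$ and suppose $m^{(0,0)}(x,v_1,v_2)$, $m^{(1,1)}(x,v_1,v_2)$ and $h(v_1,v_2\mid x)$ are continuous in $(v_1,v_2)$. Then, with $\mathbf p=(p_1^0,p_1^1,p_2^0,p_2^1)$ in the relevant conditional support $\operatorname{supp}[\mathbf P\mid X=x,D=(d_1,d_2)]$, $$m^{(0,0)}(x,p_1^0,p_2^0)=\frac{1}{\lambda h(p_1^0,p_2^0\mid x)}\frac{\partial^2\psi^{(0,0)}(x,\mathbf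 p)}{\partial p_1^0\partial p_2^0}\ \ (\lambda>0),$$ $$m^{(0,0)}(x,p_1^{d_1},p_2^{d_2})=\frac{1}{(1-\lambda)h(p_1^{d_1},p_2^{d_2}\mid x)}\frac{\partial^2\psi^{(0,0)}(x,\mathbf p)}{\partial p_1^{d_1}\partial p_2^{d_2}}\ \ (\lambda<1,\ d_1\ne d_2),$$ $$m^{(0,0)}(x,p_1^1,p_2^1)=-\frac{1}{(1-\lambda)h(p_1^1,p_2^1\mid x)}\frac{\partial^2\psi^{(0,0)}(x,\mathbf p)}{\partial p_1^1\partial p_2^1}\ \ (\lambda<1),$$ and $$m^{(1,1)}(x,p_1^0,p_2^0)=-\frac{1}{\lambda h(p_1^0,p_2^0\mid x)}\frac{\partial^2\psi^{(1,1)}(x,\mathbf p)}{\partial p_1^0\partial p_2^0}\ \ (\lambda>0),$$ $$m^{(1,1)}(x,p_1^{d_1},p_2^{d_2})=\frac{1}{\lambda h(p_1^{d_1},p_2^{d_2}\mid x)}\frac{\partial^2\psi^{(1,1)}(x,\mathbf p)}{\partial p_1^{d_1}\partial p_2^{d_2}}\ \ (\lambda>0,\ d_1\ne d_2),$$ $$m^{(1,1)}(x,p_1^1,p_2^1)=\frac{1}{(1-\lambda)h(p_1^1,p_2^1\mid x)}\frac{\partial^2\psi^{(1,1)}(x,\mathbf p)}{\partial p_1^1\partial p_2^1}\ \ (\lambda<1),$$ so that these MTR functions are identified.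
   Context: Two players $j\in\{1,2\}$ ($-j$ the partner), binary treatments $D_j$, $D=(D_1,D_2)$. Potential outcomes $Y_j^{(d_j,d_{-j})}=\mu_j^{(d_j,d_{-j})}(X_j,U_j^{(d_j,d_{-j})})$; observed $Y_1=\sum_{d_1,d_2}I^{(d_1,d_2)}Y_1^{(d_1,d_2)}$ with $I^{(d_1,d_2)}=\mathbf 1\{(D_1,D_2)=(d_1,d_2)\}$. $X=(X_1,X_2)$, $W_j=(X_j^\top,Z_j^\top)^\top$ with instruments $Z_j$, $W=(W_1,W_2)$, $\varepsilon=(\varepsilon_1,\varepsilon_2)$ continuous, $U^{(d_1,d_2)}=(U_1^{(d_1,d_2)},U_2^{(d_2,d_1)})$. Treatments: $D_j=\mathbf 1\{\pi_j(D_{-j},W_j)\ge\varepsilon_j\}$, $\pi_j^d(\cdot)=\pi_j(d,\cdot)$. $V_j=F_{\varepsilon_j}(\varepsilon_j\mid X)$, $P_j^d=F_{\varepsilon_j}(\pi_j^d(W_j)\mid X)$ for $d=0,1$, where $F_{\varepsilon_j}(\cdot\mid X)$ is the conditional CDF of $\varepsilon_j$ given $X$; $V=(V_1,V_2)$; $\mathbf P=(P_1^0,P_1^1,P_2^0,P_2^1)$. The realized $D$ is a pure-strategy Nash equilibrium of the game with payoffs $u_j(d_j,d_{-j})=d_j(P_j^0+d_{-j}(P_j^1-P_j^0)-V_j)$; under complementarity: $D=(1,0)\iff V_1\le P_1^0,V_2>P_2^1$; $D=(0,1)\iff V_1>P_1^1,V_2\le P_2^0$; $D=(1,1)\Rightarrow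 V_1\le P_1^1,V_2\le P_2^1$; $D=(0,0)\Rightarrow V_1>P_1^0,V_2>P_2^0$. Multiple-equilibria region: $\mathcal V_{\mathrm{mul}}(\mathbf P)=\{(v_1,v_2)\in[0,1]^2:P_1^0<v_1\le P_1^1,\ P_2^0<v_2\le P_2^1\}$; $\mathcal V^{(0,0)}_{\mathrm{uni}}(\mathbf P)=\{(v_1,v_2)\in[0,1]^2:P_1^0<v_1,\ P_2^0<v_2\}\setminus\mathcal V_{\mathrm{mul}}(\mathbf P)$. MTR function: $m^{(d_1,d_2)}(x,p_1,p_2)=E[Y_1^{(d_1,d_2)}\mid X=x,V_1=p_1,V_2=p_2]$. $\psi^{(d_1,d_2)}(x,\mathbf p)=E[I^{(d_1,d_2)}Y_1\mid X=x,\mathbf P=\mathbf p]$ for $\mathbf p\in\operatorname{supp}[\mathbf P\mid X=x,D=(d_1,d_2)]$, identified from data. *)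

theory Defs
  imports "HOL-Probability.Probability"
begin

text \<open>Treatments are encoded as booleans: True = 1 (treated), False = 0.
  A treatment profile is a pair (d1, d2) :: bool \<times> bool.\<close>

definition payoff :: "real \<Rightarrow> real \<Rightarrow> real \<Rightarrow> bool \<Rightarrow> bool \<Rightarrow> real" where
  "payoff P0 P1 v dj doth =
     (if dj then P0 + (if doth then P1 - P0 else 0) - v else 0)"

fun is_pure_NE :: "real \<Rightarrow> real \<Rightarrow> real \<Rightarrow> real \<Rightarrow> real \<times> real \<Rightarrow> bool \<times> bool \<Rightarrow> bool" where
  "is_pure_NE p10 p11 p20 p21 (v1, v2) (d1, d2) \<longleftrightarrow>
     payoff p10 p11 v1 d1 d2 \<ge> payoff p10 p11 v1 (\<not> d1) d2 \<and>
     payoff p20 p21 v2 d2 d1 \<ge> payoff p20 p21 v2 (\<not> d2) d1"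

definition V_mul :: "real \<Rightarrow> real \<Rightarrow> real \<Rightarrow> real \<Rightarrow> (real \<times> real) set" where
  "V_mul p10 p11 p20 p21 =
     {(v1, v2). 0 \<le> v1 \<and> v1 \<le> 1 \<and> 0 \<le> v2 \<and> v2 \<le> 1 \<and>
                p10 < v1 \<and> v1 \<le> p11 \<and> p20 < v2 \<and> v2 \<le> p21}"

definition V_uni00 :: "real \<Rightarrow> real \<Rightarrow> real \<Rightarrow> real \<Rightarrow> (real \<times> real) set" where
  "V_uni00 p10 p11 p20 p21 =
     {(v1, v2). 0 \<le> v1 \<and> v1 \<le> 1 \<and> 0 \<le> v2 \<and> v2 \<le> 1 \<and> p10 < v1 \<and> p20 < v2}
     - V_mul p10 p11 p20 p21"

definition has_mixed_partial :: "(real \<Rightarrow> real \<Rightarrow> real) \<Rightarrow> real \<Rightarrow> real \<Rightarrow> real \<Rightarrow> bool" where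
  "has_mixed_partial f a b D \<longleftrightarrow>
     (\<forall>\<^sub>F t in nhds b. (\<lambda>s. f s t) differentiable (at a)) \<and>
     ((\<lambda>t. deriv (\<lambda>s. f s t) a) has_real_derivative D) (at b)"

text \<open>Independence of two random variables with (possibly different) Borel codomains
  (the library's indep_var requires both codomains to have the same type).\<close>
definition indep_rv :: "'a measure \<Rightarrow> ('a \<Rightarrow> 'b::topological_space) \<Rightarrow> ('a \<Rightarrow> 'c::topological_space) \<Rightarrow> bool" where
  "indep_rv M X Y \<longleftrightarrow>
     X \<in> borel_measurable M \<and> Y \<in> borel_measurable M \<and>
     (\<forall>A \<in> sets borel. \<forall>B \<in> sets borel.
        measure M {\<omega> \<in> space M. X \<omega> \<in> A \<and> Y \<omega> \<in> B} =
        measure M {\<omega> \<in> space M. X \<omega> \<in> A} * measure M {\<omega> \<in> space M. Y \<omega> \<in> B})"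

end

theory Submission
  imports Defs
begin

(* By the selection rule, on the unit square the event D = (0,0) is
   {V in (p10,1] x (p20,1]} minus {V in V_mul, eps > lam}, and, away from the lines
   v1 = p11 and v2 = p21 (a null set for V), the event D = (1,1) is
   {V <= (p11,p21)} minus {V in V_mul, eps <= lam}. As eps is uniform and independent of
   (V, Y), psi^(0,0) and psi^(1,1) are linear combinations, with coefficients built from lam,
   of the values C_d(a,b) = E[Y_d 1{V <= (a,b)}] = int_0^a int_0^b m^d h at the grid points
   a in {p10, p11, 1}, b in {p20, p21, 1}. The mixed partial of C_d at (a,b) is m^d(a,b) h(a,b)
   and terms depending on only one of the two varied arguments drop out, so each mixed partial
   of psi^d picks out the coefficient of C_d at the corresponding grid point. *)

lemma has_mixed_partialI:
  assumes "\<forall>\<^sub>F t in nhds b. ((\<lambda>s. F s t) has_real_derivative F\<^sub>1 t) (at a)"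
    and "(F\<^sub>1 has_real_derivative D) (at b)"
  shows "has_mixed_partial F a b D"
proof -
  have "\<forall>\<^sub>F t in nhds b. (\<lambda>s. F s t) differentiable (at a) \<and> deriv (\<lambda>s. F s t) a = F\<^sub>1 t"
    using assms(1) by eventually_elim (auto simp: real_differentiable_def DERIV_imp_deriv)
  moreover from this have "((\<lambda>t. deriv (\<lambda>s. F s t) a) has_real_derivative D) (at b)"
    using assms(2) by (subst DERIV_cong_ev[OF refl _ refl]) (auto elim: eventually_mono)
  ultimately show ?thesis
    unfolding has_mixed_partial_def by (auto elim: eventually_mono)
qed

lemma has_mixed_partialD:
  assumes "has_mixed_partial F a b D"
  shows "\<forall>\<^sub>F t in nhds b. ((\<lambda>s. F s t) has_real_derivative deriv (\<lambda>s. F s t) a) (at a)"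
    and "((\<lambda>t. deriv (\<lambda>s. F s t) a) has_real_derivative D) (at b)"
  using assms unfolding has_mixed_partial_def DERIV_deriv_iff_real_differentiable by auto

lemma has_mixed_partial_transform_open:
  assumes "open A" "open B" "a \<in> A" "b \<in> B"
    and eq: "\<And>s t. s \<in> A \<Longrightarrow> t \<in> B \<Longrightarrow> F s t = G s t"
    and G: "has_mixed_partial G a b D"
  shows "has_mixed_partial F a b D"
proof (rule has_mixed_partialI)
  have "\<forall>\<^sub>F t in nhds b. t \<in> B" by (rule eventually_nhds_in_open) fact+
  with has_mixed_partialD(1)[OF G]
  show "\<forall>\<^sub>F t in nhds b. ((\<lambda>s. F s t) has_real_derivative deriv (\<lambda>s. G s t) a) (at a)"
  proof eventually_elim
    case (elim t)
    have "\<forall>\<^sub>F s in nhds a. F s t = G s t"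
      using eventually_nhds_in_open[OF \<open>open A\<close> \<open>a \<in> A\<close>] by eventually_elim (use elim eq in auto)
    with elim show ?case by (simp add: DERIV_cong_ev)
  qed
qed (rule has_mixed_partialD(2)[OF G])

lemma has_mixed_partial_add:
  assumes F: "has_mixed_partial F a b D" and G: "has_mixed_partial G a b E"
  shows "has_mixed_partial (\<lambda>s t. F s t + G s t) a b (D + E)"
  using has_mixed_partialD[OF F] has_mixed_partialD[OF G]
  by (auto intro!: has_mixed_partialI DERIV_add elim: eventually_elim2)

lemma has_mixed_partial_cmult:
  assumes "has_mixed_partial F a b D"
  shows "has_mixed_partial (\<lambda>s t. c * F s t) a b (c * D)"
  using has_mixed_partialD[OF assms]
  by (auto intro!: has_mixed_partialI DERIV_cmult elim: eventually_mono)

lemma has_mixed_partial_diff: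
  assumes "has_mixed_partial F a b D" "has_mixed_partial G a b E"
  shows "has_mixed_partial (\<lambda>s t. F s t - G s t) a b (D - E)"
  using has_mixed_partial_add[OF assms(1) has_mixed_partial_cmult[OF assms(2), of "-1"]] by simp

lemma has_mixed_partial_fun_snd: "has_mixed_partial (\<lambda>s t. k t) a b 0"
  by (rule has_mixed_partialI[where F\<^sub>1 = "\<lambda>t. 0"]) auto

lemma has_mixed_partial_fun_fst:
  assumes "(g has_real_derivative g') (at a)"
  shows "has_mixed_partial (\<lambda>s t. g s) a b 0"
  by (rule has_mixed_partialI[where F\<^sub>1 = "\<lambda>t. g'"]) (use assms in auto)

definition box_integral :: "(real \<times> real \<Rightarrow> real) \<Rightarrow> real \<Rightarrow> real \<Rightarrow> real" where
  "box_integral f a b = integral {0..a} (\<lambda>x. integral {0..b} (\<lambda>y. f (x, y)))"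

lemma lborel_integral_eq_box_integral:
  fixes f :: "real \<times> real \<Rightarrow> real"
  assumes "continuous_on ({0..a} \<times> {0..b}) f"
  shows "(\<integral>v. indicator ({0..a} \<times> {0..b}) v * f v \<partial>lborel) = box_integral f a b"
proof -
  have box: "{0..a} \<times> {0..b} = cbox (0, 0) (a, b)" by (simp add: cbox_Pair_eq)
  have "set_integrable lborel ({0..a} \<times> {0..b}) f"
    unfolding set_integrable_def box by (rule borel_integrable_compact) (use assms box in auto)
  then have "(\<integral>v. indicator ({0..a} \<times> {0..b}) v * f v \<partial>lborel) = integral ({0..a} \<times> {0..b}) f"
    by (simp add: set_borel_integral_eq_integral(2)[symmetric] set_lebesgue_integral_def)
  also have "\<dots> = box_integral f a b"
    using integral_prod_continuous[of 0 0 a b f] assms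
    by (simp add: box box_integral_def cbox_interval)
  finally show ?thesis .
qed

lemma has_real_derivative_box_integral_fst:
  fixes f :: "real \<times> real \<Rightarrow> real"
  assumes f: "continuous_on ({0..1} \<times> {0..1}) f" and "0 < a" "a < 1" "0 \<le> b" "b \<le> 1"
  shows "((\<lambda>s. box_integral f s b) has_real_derivative integral {0..b} (\<lambda>y. f (a, y))) (at a)"
proof -
  have "continuous_on ({0..1} \<times> {0..b}) f"
    by (rule continuous_on_subset[OF f]) (use assms in auto)
  then have "continuous_on {0..1} (\<lambda>x. integral {0..b} (\<lambda>y. f (x, y)))"
    using integral_continuous_on_param[of "{0..1}" 0 b "\<lambda>x y. f (x, y)"]
    by (simp add: cbox_interval case_prod_eta)
  from integral_has_real_derivative[OF this, of a] assms show ?thesis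
    by (simp add: box_integral_def at_within_Icc_at)
qed

lemma has_mixed_partial_box_integral:
  fixes f :: "real \<times> real \<Rightarrow> real"
  assumes f: "continuous_on ({0..1} \<times> {0..1}) f" and a: "0 < a" "a < 1" and b: "0 < b" "b < 1"
  shows "has_mixed_partial (box_integral f) a b (f (a, b))"
proof (rule has_mixed_partialI)
  have "\<forall>\<^sub>F t in nhds b. t \<in> {0<..<1}" using b by (intro eventually_nhds_in_open) auto
  then show "\<forall>\<^sub>F t in nhds b. ((\<lambda>s. box_integral f s t) has_real_derivative
      integral {0..t} (\<lambda>y. f (a, y))) (at a)"
    by eventually_elim (use f a in \<open>auto intro: has_real_derivative_box_integral_fst\<close>)
  have "continuous_on {0..1} (\<lambda>y. f (a, y))"
    by (rule continuous_on_compose2[OF f]) (use a in \<open>auto intro!: continuous_intros\<close>)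
  from integral_has_real_derivative[OF this, of b] b
  show "((\<lambda>t. integral {0..t} (\<lambda>y. f (a, y))) has_real_derivative f (a, b)) (at b)"
    by (simp add: at_within_Icc_at)
qed

lemmas has_mixed_partial_intros =
  has_mixed_partial_add has_mixed_partial_diff has_mixed_partial_cmult has_mixed_partial_box_integral
  has_mixed_partial_fun_snd has_mixed_partial_fun_fst has_real_derivative_box_integral_fst

lemma (in prob_space) indep_var_compose_indep_rv:
  fixes X :: "'a \<Rightarrow> 'b::topological_space" and Z :: "'a \<Rightarrow> 'c::topological_space"
    and f :: "'b \<Rightarrow> real" and g :: "'c \<Rightarrow> real"
  assumes XZ: "indep_rv M X Z" and f: "f \<in> borel_measurable borel" and g: "g \<in> borel_measurable borel"
  shows "indep_var borel (\<lambda>\<omega>. f (X \<omega>)) borel (\<lambda>\<omega>. g (Z \<omega>))"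
proof -
  have X: "X \<in> borel_measurable M" and Z: "Z \<in> borel_measurable M"
    and prod: "\<And>A B. A \<in> sets borel \<Longrightarrow> B \<in> sets borel \<Longrightarrow>
      prob {\<omega> \<in> space M. X \<omega> \<in> A \<and> Z \<omega> \<in> B} =
      prob {\<omega> \<in> space M. X \<omega> \<in> A} * prob {\<omega> \<in> space M. Z \<omega> \<in> B}"
    using XZ unfolding indep_rv_def by auto
  have fX: "(\<lambda>\<omega>. f (X \<omega>)) \<in> borel_measurable M" and gZ: "(\<lambda>\<omega>. g (Z \<omega>)) \<in> borel_measurable M"
    using X Z f g by measurable
  let ?\<sigma> = "\<lambda>h :: 'a \<Rightarrow> real. {h -` A \<inter> space M | A. A \<in> sets borel}"
  have stable: "Int_stable (?\<sigma> h)" for h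
  proof (rule Int_stableI)
    fix a b assume "a \<in> ?\<sigma> h" "b \<in> ?\<sigma> h"
    then obtain A B where "A \<in> sets borel" "B \<in> sets borel"
      and "a = h -` A \<inter> space M" "b = h -` B \<inter> space M" by blast
    then show "a \<inter> b \<in> ?\<sigma> h" by (intro CollectI exI[of _ "A \<inter> B"]) auto
  qed
  have "indep_set (?\<sigma> (\<lambda>\<omega>. f (X \<omega>))) (?\<sigma> (\<lambda>\<omega>. g (Z \<omega>)))"
    unfolding indep_sets2_eq
  proof (intro conjI ballI)
    show "?\<sigma> (\<lambda>\<omega>. f (X \<omega>)) \<subseteq> events" "?\<sigma> (\<lambda>\<omega>. g (Z \<omega>)) \<subseteq> events"
      using fX gZ by (auto intro: measurable_sets)
    fix a b assume "a \<in> ?\<sigma> (\<lambda>\<omega>. f (X \<omega>))" "b \<in> ?\<sigma> (\<lambda>\<omega>. g (Z \<omega>))"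
    then obtain A B where A: "A \<in> sets borel" and B: "B \<in> sets borel"
      and ab: "a = {\<omega> \<in> space M. X \<omega> \<in> f -` A}" "b = {\<omega> \<in> space M. Z \<omega> \<in> g -` B}" by blast
    have "a \<inter> b = {\<omega> \<in> space M. X \<omega> \<in> f -` A \<and> Z \<omega> \<in> g -` B}" using ab by auto
    then show "prob (a \<inter> b) = prob a * prob b"
      using prod[OF measurable_sets_borel[OF f A] measurable_sets_borel[OF g B]] ab by simp
  qed
  then show ?thesis
    unfolding indep_var_eq using fX gZ stable by (simp add: indep_set_sigma_sets)
qed

lemma (in prob_space) expectation_indicator_uniform01:
  assumes X: "distributed M lborel X (\<lambda>x. indicator {0..1::real} x :: ennreal)" and "0 \<le> c" "c \<le> 1"
  shows "expectation (\<lambda>\<omega>. indicator {..c} (X \<omega>) :: real) = c"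
proof -
  have "{\<omega> \<in> space M. X \<omega> \<le> c} \<in> events"
    using distributed_measurable[OF X] by measurable
  moreover have "expectation (\<lambda>\<omega>. indicator {..c} (X \<omega>) :: real) =
      expectation (indicator {\<omega> \<in> space M. X \<omega> \<le> c})"
    by (intro Bochner_Integration.integral_cong) (auto split: split_indicator)
  ultimately have "expectation (\<lambda>\<omega>. indicator {..c} (X \<omega>) :: real) = \<P>(\<omega> in M. X \<omega> \<le> c)"
    by simp
  also have "\<dots> = c"
    using uniform_distributed_measure[of X 0 1 c] X assms by (simp add: ennreal_indicator)
  finally show ?thesis .
qed

lemma axis_parallel_lines_null:
  "{a} \<times> UNIV \<union> UNIV \<times> {b} \<in> null_sets (lborel :: (real \<times> real) measure)"
proof -
  have "{a} \<times> UNIV \<in> null_sets (lborel \<Otimes>\<^sub>M lborel)" "UNIV \<times> {b} \<in> null_sets (lborel \<Otimes>\<^sub>M lborel)"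
    by (auto simp: null_sets_def lborel.emeasure_pair_measure_Times)
  then show ?thesis unfolding lborel_prod by auto
qed

lemma AE_distributed_notin_null_set:
  assumes "distributed M lborel X f" "N \<in> null_sets lborel"
  shows "AE \<omega> in M. X \<omega> \<notin> N"
proof -
  have "AE x in density lborel f. x \<notin> N"
    using AE_not_in[OF assms(2)] distributed_borel_measurable[OF assms(1)]
    by (auto simp: AE_density elim: eventually_mono)
  then show ?thesis
    using AE_distrD[OF distributed_measurable[OF assms(1)]]
    unfolding distributed_distr_eq_density[OF assms(1)] by blast
qed

lemma sets_borel_Times [measurable]:
  "A \<in> sets borel \<Longrightarrow> B \<in> sets borel \<Longrightarrow>
    A \<times> B \<in> sets (borel :: ('a::second_countable_topology \<times> 'b::second_countable_topology) measure)"
  unfolding borel_prod[symmetric] by simp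

lemma indicator_half_open_box:
  fixes a0 a1 b0 b1 :: real
  assumes "a0 \<le> a1" "b0 \<le> b1"
  shows "indicator ({a0<..a1} \<times> {b0<..b1}) v =
    indicator ({..a1} \<times> {..b1}) v - indicator ({..a0} \<times> {..b1}) v
      - indicator ({..a1} \<times> {..b0}) v + (indicator ({..a0} \<times> {..b0}) v :: real)"
  using assms by (cases v) (auto simp: indicator_def)

lemma is_pure_NE_iff:
  "is_pure_NE p10 p11 p20 p21 (v1, v2) (d1, d2) \<longleftrightarrow>
     (if d1 then v1 \<le> (if d2 then p11 else p10) else (if d2 then p11 else p10) \<le> v1) \<and>
     (if d2 then v2 \<le> (if d1 then p21 else p20) else (if d1 then p21 else p20) \<le> v2)"
  by (cases d1; cases d2) (auto simp: payoff_def)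

lemma selected_00_indicator:
  fixes v1 v2 y :: real
  assumes "(v1, v2) \<in> {0..1} \<times> {0..1}"
    and "d = (False, False) \<longleftrightarrow>
      (v1, v2) \<in> V_uni00 q10 q11 q20 q21 \<or> ((v1, v2) \<in> V_mul q10 q11 q20 q21 \<and> e \<le> lam)"
  shows "(if d = (False, False) then y else 0) =
    indicator ({q10<..1} \<times> {q20<..1}) (v1, v2) * y - indicator ({q10<..q11} \<times> {q20<..q21}) (v1, v2) * y
      + indicator ({q10<..q11} \<times> {q20<..q21}) (v1, v2) * indicator {..lam} e * y"
  using assms
  by (cases "q10 < v1"; cases "v1 \<le> q11"; cases "q20 < v2"; cases "v2 \<le> q21"; cases "e \<le> lam")
     (simp_all add: V_uni00_def V_mul_def indicator_def)

lemma is_pure_NE_True_True_iff: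
  assumes "is_pure_NE q10 q11 q20 q21 (v1, v2) (d1, d2)" "v1 \<noteq> q11" "v2 \<noteq> q21"
  shows "d1 \<and> d2 \<longleftrightarrow> v1 < q11 \<and> v2 < q21 \<and> (d1 \<or> d2)"
  using assms unfolding is_pure_NE_iff by (cases d1; cases d2) auto

lemma selected_11_indicator:
  fixes v1 v2 y :: real
  assumes "is_pure_NE q10 q11 q20 q21 (v1, v2) (d1, d2)" "v1 \<noteq> q11" "v2 \<noteq> q21"
    and "(v1, v2) \<in> {0..1} \<times> {0..1}"
    and "(d1, d2) = (False, False) \<longleftrightarrow>
      (v1, v2) \<in> V_uni00 q10 q11 q20 q21 \<or> ((v1, v2) \<in> V_mul q10 q11 q20 q21 \<and> e \<le> lam)"
  shows "(if (d1, d2) = (True, True) then y else 0) =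
    indicator ({..q11} \<times> {..q21}) (v1, v2) * y
      - indicator ({q10<..q11} \<times> {q20<..q21}) (v1, v2) * indicator {..lam} e * y"
proof -
  have "(d1, d2) = (False, False) \<longleftrightarrow>
      q10 < v1 \<and> q20 < v2 \<and> \<not> (v1 \<le> q11 \<and> v2 \<le> q21) \<or>
      q10 < v1 \<and> v1 \<le> q11 \<and> q20 < v2 \<and> v2 \<le> q21 \<and> e \<le> lam"
    using assms(4,5) by (auto simp: V_uni00_def V_mul_def)
  with is_pure_NE_True_True_iff[OF assms(1-3)]
  have "d1 \<and> d2 \<longleftrightarrow> v1 < q11 \<and> v2 < q21 \<and> \<not> (q10 < v1 \<and> q20 < v2 \<and> e \<le> lam)"
    by auto
  with assms(2,3) show ?thesis
    by (auto simp: indicator_def)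
qed

locale treatment_game = prob_space M
  for M :: "'a measure" and V :: "'a \<Rightarrow> real \<times> real" and eps :: "'a \<Rightarrow> real"
    and Y :: "bool \<times> bool \<Rightarrow> 'a \<Rightarrow> real"
    and Dsel :: "real \<Rightarrow> real \<Rightarrow> real \<Rightarrow> real \<Rightarrow> 'a \<Rightarrow> bool \<times> bool"
    and lam :: real and h :: "real \<times> real \<Rightarrow> real" and m :: "bool \<times> bool \<Rightarrow> real \<times> real \<Rightarrow> real"
    and psi :: "bool \<times> bool \<Rightarrow> real \<Rightarrow> real \<Rightarrow> real \<Rightarrow> real \<Rightarrow> real" +
  assumes V_range: "\<And>\<omega>. \<omega> \<in> space M \<Longrightarrow> V \<omega> \<in> {0..1} \<times> {0..1}"
    and V_density: "distributed M lborel V (\<lambda>v. ennreal (h v))"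
    and eps_unif: "distributed M lborel eps (\<lambda>e. indicator {0..1::real} e :: ennreal)"
    and eps_indep: "\<And>d. indep_rv M eps (\<lambda>\<omega>. (V \<omega>, Y d \<omega>))"
    and Y_int: "\<And>d. integrable M (Y d)"
    and lam: "0 \<le> lam" "lam \<le> 1"
    and D_meas: "\<And>q10 q11 q20 q21. Dsel q10 q11 q20 q21 \<in> M \<rightarrow>\<^sub>M count_space UNIV"
    and D_NE: "\<And>q10 q11 q20 q21 \<omega>. \<lbrakk>0 < q10; q10 < q11; q11 < 1; 0 < q20; q20 < q21; q21 < 1;
                 \<omega> \<in> space M\<rbrakk> \<Longrightarrow> is_pure_NE q10 q11 q20 q21 (V \<omega>) (Dsel q10 q11 q20 q21 \<omega>)"
    and D_sel: "\<And>q10 q11 q20 q21 \<omega>. \<lbrakk>0 < q10; q10 < q11; q11 < 1; 0 < q20; q20 < q21; q21 < 1;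
                 \<omega> \<in> space M\<rbrakk> \<Longrightarrow>
                 (Dsel q10 q11 q20 q21 \<omega> = (False, False) \<longleftrightarrow>
                    V \<omega> \<in> V_uni00 q10 q11 q20 q21 \<or>
                    (V \<omega> \<in> V_mul q10 q11 q20 q21 \<and> eps \<omega> \<le> lam))"
    and m_MTR: "\<And>d B. B \<in> sets borel \<Longrightarrow>
                 (\<integral>\<omega>. indicator B (V \<omega>) * Y d \<omega> \<partial>M) = (\<integral>v. indicator B v * (m d v * h v) \<partial>lborel)"
    and psi_def: "\<And>d q10 q11 q20 q21. \<lbrakk>0 < q10; q10 < q11; q11 < 1; 0 < q20; q20 < q21; q21 < 1\<rbrakk> \<Longrightarrow>
                 psi d q10 q11 q20 q21 =
                   (\<integral>\<omega>. (if Dsel q10 q11 q20 q21 \<omega> = d then 1 else 0) *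
                         (\<Sum>d'\<in>UNIV. (if Dsel q10 q11 q20 q21 \<omega> = d' then 1 else 0) * Y d' \<omega>) \<partial>M)"
begin

definition moment :: "bool \<times> bool \<Rightarrow> (real \<times> real) set \<Rightarrow> real" where
  "moment d B = expectation (\<lambda>\<omega>. indicator B (V \<omega>) * Y d \<omega>)"

abbreviation cumulative_mtr :: "bool \<times> bool \<Rightarrow> real \<Rightarrow> real \<Rightarrow> real" where
  "cumulative_mtr d \<equiv> box_integral (\<lambda>v. m d v * h v)"

lemma V_measurable [measurable]: "V \<in> borel_measurable M"
  using distributed_measurable[OF V_density] by simp

lemma eps_measurable [measurable]: "eps \<in> borel_measurable M"
  using distributed_measurable[OF eps_unif] by simp

lemma Y_measurable [measurable]: "Y d \<in> borel_measurable M"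
  using Y_int by (rule borel_measurable_integrable)

lemma integrable_indicator_V_mult:
  assumes [measurable]: "B \<in> sets borel"
  shows "integrable M (\<lambda>\<omega>. indicator B (V \<omega>) * Y d \<omega>)"
  by (rule Bochner_Integration.integrable_bound[OF Y_int]) (auto simp: indicator_def)

lemma integrable_indicator_V_eps_mult:
  assumes [measurable]: "B \<in> sets borel"
  shows "integrable M (\<lambda>\<omega>. indicator B (V \<omega>) * indicator {..lam} (eps \<omega>) * Y d \<omega>)"
  by (rule Bochner_Integration.integrable_bound[OF Y_int]) (auto simp: indicator_def)

lemma moment_indicator_eps:
  assumes [measurable]: "B \<in> sets borel"
  shows "expectation (\<lambda>\<omega>. indicator B (V \<omega>) * indicator {..lam} (eps \<omega>) * Y d \<omega>) = lam * moment d B"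
proof -
  have "(\<lambda>(v, y). indicator B v * y :: real) \<in> borel_measurable (borel \<Otimes>\<^sub>M borel)"
    by measurable
  then have "indep_var borel (\<lambda>\<omega>. indicator {..lam} (eps \<omega>) :: real)
      borel (\<lambda>\<omega>. (\<lambda>(v, y). indicator B v * y) (V \<omega>, Y d \<omega>))"
    by (intro indep_var_compose_indep_rv[OF eps_indep]) (auto simp: borel_prod)
  then have "expectation (\<lambda>\<omega>. indicator {..lam} (eps \<omega>) * (indicator B (V \<omega>) * Y d \<omega>)) =
      expectation (\<lambda>\<omega>. indicator {..lam} (eps \<omega>) :: real) * moment d B"
    unfolding moment_def
    by (intro indep_var_lebesgue_integral)
       (auto intro: integrable_indicator_V_mult integrable_const_bound[where B = 1])
  then show ?thesis
    using expectation_indicator_uniform01[OF eps_unif lam] by (simp add: ac_simps)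
qed

lemma moment_half_open_box:
  assumes "a0 \<le> a1" "b0 \<le> b1"
  shows "moment d ({a0<..a1} \<times> {b0<..b1}) =
    moment d ({..a1} \<times> {..b1}) - moment d ({..a0} \<times> {..b1})
      - moment d ({..a1} \<times> {..b0}) + moment d ({..a0} \<times> {..b0})"
  unfolding moment_def indicator_half_open_box[OF assms] left_diff_distrib distrib_right
  by (simp add: integrable_indicator_V_mult sets_borel_Times)

lemma moment_lower_box:
  assumes "continuous_on ({0..1} \<times> {0..1}) (\<lambda>v. m d v * h v)"
    and "0 \<le> a" "a \<le> 1" "0 \<le> b" "b \<le> 1"
  shows "moment d ({..a} \<times> {..b}) = cumulative_mtr d a b"
proof -
  have "moment d ({..a} \<times> {..b}) = expectation (\<lambda>\<omega>. indicator ({0..a} \<times> {0..b}) (V \<omega>) * Y d \<omega>)"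
    unfolding moment_def
    by (intro Bochner_Integration.integral_cong refl) (auto dest: V_range split: split_indicator)
  also have "\<dots> = (\<integral>v. indicator ({0..a} \<times> {0..b}) v * (m d v * h v) \<partial>lborel)"
    by (intro m_MTR) measurable
  also have "\<dots> = cumulative_mtr d a b"
    by (intro lborel_integral_eq_box_integral continuous_on_subset[OF assms(1)]) (use assms in auto)
  finally show ?thesis .
qed

lemma psi_eq_expectation:
  assumes "0 < q10" "q10 < q11" "q11 < 1" "0 < q20" "q20 < q21" "q21 < 1"
  shows "psi d q10 q11 q20 q21 = expectation (\<lambda>\<omega>. if Dsel q10 q11 q20 q21 \<omega> = d then Y d \<omega> else 0)"
  unfolding psi_def[OF assms]
  by (intro Bochner_Integration.integral_cong refl) (simp add: if_distrib[of "\<lambda>z. z * _"] cong: if_cong)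

lemma psi_00_eq:
  assumes q: "0 < q10" "q10 < q11" "q11 < 1" "0 < q20" "q20 < q21" "q21 < 1"
  shows "psi (False, False) q10 q11 q20 q21 =
    moment (False, False) ({q10<..1} \<times> {q20<..1})
      - (1 - lam) * moment (False, False) ({q10<..q11} \<times> {q20<..q21})"
proof -
  let ?d = "(False, False)" and ?Q = "{q10<..1} \<times> {q20<..1}" and ?R = "{q10<..q11} \<times> {q20<..q21}"
  have "psi ?d q10 q11 q20 q21 = expectation (\<lambda>\<omega>. indicator ?Q (V \<omega>) * Y ?d \<omega>
      - indicator ?R (V \<omega>) * Y ?d \<omega> + indicator ?R (V \<omega>) * indicator {..lam} (eps \<omega>) * Y ?d \<omega>)"
    unfolding psi_eq_expectation[OF q]
  proof (intro Bochner_Integration.integral_cong refl)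
    fix \<omega> assume \<omega>: "\<omega> \<in> space M"
    obtain v1 v2 where v: "V \<omega> = (v1, v2)" by fastforce
    from selected_00_indicator[OF V_range[OF \<omega>, unfolded v] D_sel[OF q \<omega>, unfolded v]] v
    show "(if Dsel q10 q11 q20 q21 \<omega> = ?d then Y ?d \<omega> else 0) = indicator ?Q (V \<omega>) * Y ?d \<omega>
      - indicator ?R (V \<omega>) * Y ?d \<omega> + indicator ?R (V \<omega>) * indicator {..lam} (eps \<omega>) * Y ?d \<omega>"
      by simp
  qed
  also have "\<dots> = moment ?d ?Q - moment ?d ?R
      + expectation (\<lambda>\<omega>. indicator ?R (V \<omega>) * indicator {..lam} (eps \<omega>) * Y ?d \<omega>)"
    by (simp add: moment_def integrable_indicator_V_mult integrable_indicator_V_eps_mult)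
  also have "\<dots> = moment ?d ?Q - moment ?d ?R + lam * moment ?d ?R"
    by (simp add: moment_indicator_eps)
  finally show ?thesis
    by (simp add: algebra_simps)
qed

lemma psi_11_eq:
  assumes q: "0 < q10" "q10 < q11" "q11 < 1" "0 < q20" "q20 < q21" "q21 < 1"
  shows "psi (True, True) q10 q11 q20 q21 =
    moment (True, True) ({..q11} \<times> {..q21}) - lam * moment (True, True) ({q10<..q11} \<times> {q20<..q21})"
proof -
  let ?d = "(True, True)" and ?L = "{..q11} \<times> {..q21}" and ?R = "{q10<..q11} \<times> {q20<..q21}"
  have "psi ?d q10 q11 q20 q21 = expectation (\<lambda>\<omega>. indicator ?L (V \<omega>) * Y ?d \<omega>
      - indicator ?R (V \<omega>) * indicator {..lam} (eps \<omega>) * Y ?d \<omega>)"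
    unfolding psi_eq_expectation[OF q]
  proof (intro integral_cong_AE)
    have "{\<omega> \<in> space M. Dsel q10 q11 q20 q21 \<omega> = ?d} \<in> sets M"
      using D_meas by measurable
    then show "(\<lambda>\<omega>. if Dsel q10 q11 q20 q21 \<omega> = ?d then Y ?d \<omega> else 0) \<in> borel_measurable M"
      by measurable
    show "(\<lambda>\<omega>. indicator ?L (V \<omega>) * Y ?d \<omega>
      - indicator ?R (V \<omega>) * indicator {..lam} (eps \<omega>) * Y ?d \<omega>) \<in> borel_measurable M"
      by measurable
    show "AE \<omega> in M. (if Dsel q10 q11 q20 q21 \<omega> = ?d then Y ?d \<omega> else 0) = indicator ?L (V \<omega>) * Y ?d \<omega>
      - indicator ?R (V \<omega>) * indicator {..lam} (eps \<omega>) * Y ?d \<omega>"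
      using AE_distributed_notin_null_set[OF V_density axis_parallel_lines_null[of q11 q21]]
    proof (rule AE_mp[OF _ AE_I2], intro impI)
      fix \<omega> assume \<omega>: "\<omega> \<in> space M" and "V \<omega> \<notin> {q11} \<times> UNIV \<union> UNIV \<times> {q21}"
      moreover obtain v1 v2 where "V \<omega> = (v1, v2)" by fastforce
      moreover obtain d1 d2 where "Dsel q10 q11 q20 q21 \<omega> = (d1, d2)" by fastforce
      ultimately show "(if Dsel q10 q11 q20 q21 \<omega> = ?d then Y ?d \<omega> else 0) = indicator ?L (V \<omega>) * Y ?d \<omega>
        - indicator ?R (V \<omega>) * indicator {..lam} (eps \<omega>) * Y ?d \<omega>"
        using selected_11_indicator[of q10 q11 q20 q21 v1 v2 d1 d2 "eps \<omega>" lam "Y ?d \<omega>"]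
          V_range[OF \<omega>] D_NE[OF q \<omega>] D_sel[OF q \<omega>]
        by auto
    qed
  qed
  also have "\<dots> = moment ?d ?L
      - expectation (\<lambda>\<omega>. indicator ?R (V \<omega>) * indicator {..lam} (eps \<omega>) * Y ?d \<omega>)"
    by (simp add: moment_def integrable_indicator_V_mult integrable_indicator_V_eps_mult)
  finally show ?thesis
    by (simp add: moment_indicator_eps)
qed

lemma psi_00_cumulative:
  assumes cont: "continuous_on ({0..1} \<times> {0..1}) (\<lambda>v. m (False, False) v * h v)"
    and q: "0 < q10" "q10 < q11" "q11 < 1" "0 < q20" "q20 < q21" "q21 < 1"
  shows "psi (False, False) q10 q11 q20 q21 =
    cumulative_mtr (False, False) 1 1 - cumulative_mtr (False, False) q10 1
      - cumulative_mtr (False, False) 1 q20 + cumulative_mtr (False, False) q10 q20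
    - (1 - lam) * (cumulative_mtr (False, False) q11 q21 - cumulative_mtr (False, False) q10 q21
      - cumulative_mtr (False, False) q11 q20 + cumulative_mtr (False, False) q10 q20)"
  using q by (simp add: psi_00_eq moment_half_open_box moment_lower_box[OF cont])

lemma psi_11_cumulative:
  assumes cont: "continuous_on ({0..1} \<times> {0..1}) (\<lambda>v. m (True, True) v * h v)"
    and q: "0 < q10" "q10 < q11" "q11 < 1" "0 < q20" "q20 < q21" "q21 < 1"
  shows "psi (True, True) q10 q11 q20 q21 =
    cumulative_mtr (True, True) q11 q21
    - lam * (cumulative_mtr (True, True) q11 q21 - cumulative_mtr (True, True) q10 q21
      - cumulative_mtr (True, True) q11 q20 + cumulative_mtr (True, True) q10 q20)"
  using q by (simp add: psi_11_eq moment_half_open_box moment_lower_box[OF cont])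

lemma mixed_partials_psi_00:
  assumes cont: "continuous_on ({0..1} \<times> {0..1}) (\<lambda>v. m (False, False) v * h v)"
    and p: "0 < p10" "p10 < p11" "p11 < 1" "0 < p20" "p20 < p21" "p21 < 1"
  defines "f \<equiv> \<lambda>v. m (False, False) v * h v"
  shows "has_mixed_partial (\<lambda>s t. psi (False, False) s p11 t p21) p10 p20 (lam * f (p10, p20))"
    and "has_mixed_partial (\<lambda>s t. psi (False, False) s p11 p20 t) p10 p21 ((1 - lam) * f (p10, p21))"
    and "has_mixed_partial (\<lambda>s t. psi (False, False) p10 s t p21) p11 p20 ((1 - lam) * f (p11, p20))"
    and "has_mixed_partial (\<lambda>s t. psi (False, False) p10 s p20 t) p11 p21 (- (1 - lam) * f (p11, p21))"
proof -
  let ?C = "cumulative_mtr (False, False)"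
  note psi = psi_00_cumulative[OF cont]
  note intros = has_mixed_partial_intros cont
  show "has_mixed_partial (\<lambda>s t. psi (False, False) s p11 t p21) p10 p20 (lam * f (p10, p20))"
  proof (rule has_mixed_partial_transform_open[of "{0<..<p11}" "{0<..<p21}"])
    show "has_mixed_partial (\<lambda>s t. ?C 1 1 - ?C s 1 - ?C 1 t + ?C s t
        - (1 - lam) * (?C p11 p21 - ?C s p21 - ?C p11 t + ?C s t)) p10 p20 (lam * f (p10, p20))"
      \<comment> \<open>\<open>back_subst\<close> leaves the value schematic while the rules compute it term by term\<close>
      apply (rule back_subst[where P = "has_mixed_partial _ p10 p20"])
      apply (rule intros | use p in linarith)+
      apply (simp add: f_def algebra_simps)
      done
  qed (use p in \<open>auto simp: psi\<close>)
  show "has_mixed_partial (\<lambda>s t. psi (False, False) s p11 p20 t) p10 p21 ((1 - lam) * f (p10, p21))"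
  proof (rule has_mixed_partial_transform_open[of "{0<..<p11}" "{p20<..<1}"])
    show "has_mixed_partial (\<lambda>s t. ?C 1 1 - ?C s 1 - ?C 1 p20 + ?C s p20
        - (1 - lam) * (?C p11 t - ?C s t - ?C p11 p20 + ?C s p20)) p10 p21 ((1 - lam) * f (p10, p21))"
      apply (rule back_subst[where P = "has_mixed_partial _ p10 p21"])
      apply (rule intros | use p in linarith)+
      apply (simp add: f_def algebra_simps)
      done
  qed (use p in \<open>auto simp: psi\<close>)
  show "has_mixed_partial (\<lambda>s t. psi (False, False) p10 s t p21) p11 p20 ((1 - lam) * f (p11, p20))"
  proof (rule has_mixed_partial_transform_open[of "{p10<..<1}" "{0<..<p21}"])
    show "has_mixed_partial (\<lambda>s t. ?C 1 1 - ?C p10 1 - ?C 1 t + ?C p10 t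
        - (1 - lam) * (?C s p21 - ?C p10 p21 - ?C s t + ?C p10 t)) p11 p20 ((1 - lam) * f (p11, p20))"
      apply (rule back_subst[where P = "has_mixed_partial _ p11 p20"])
      apply (rule intros | use p in linarith)+
      apply (simp add: f_def algebra_simps)
      done
  qed (use p in \<open>auto simp: psi\<close>)
  show "has_mixed_partial (\<lambda>s t. psi (False, False) p10 s p20 t) p11 p21 (- (1 - lam) * f (p11, p21))"
  proof (rule has_mixed_partial_transform_open[of "{p10<..<1}" "{p20<..<1}"])
    show "has_mixed_partial (\<lambda>s t. ?C 1 1 - ?C p10 1 - ?C 1 p20 + ?C p10 p20
        - (1 - lam) * (?C s t - ?C p10 t - ?C s p20 + ?C p10 p20)) p11 p21 (- (1 - lam) * f (p11, p21))"
      apply (rule back_subst[where P = "has_mixed_partial _ p11 p21"])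
      apply (rule intros | use p in linarith)+
      apply (simp add: f_def algebra_simps)
      done
  qed (use p in \<open>auto simp: psi\<close>)
qed

lemma mixed_partials_psi_11:
  assumes cont: "continuous_on ({0..1} \<times> {0..1}) (\<lambda>v. m (True, True) v * h v)"
    and p: "0 < p10" "p10 < p11" "p11 < 1" "0 < p20" "p20 < p21" "p21 < 1"
  defines "f \<equiv> \<lambda>v. m (True, True) v * h v"
  shows "has_mixed_partial (\<lambda>s t. psi (True, True) s p11 t p21) p10 p20 (- lam * f (p10, p20))"
    and "has_mixed_partial (\<lambda>s t. psi (True, True) s p11 p20 t) p10 p21 (lam * f (p10, p21))"
    and "has_mixed_partial (\<lambda>s t. psi (True, True) p10 s t p21) p11 p20 (lam * f (p11, p20))"
    and "has_mixed_partial (\<lambda>s t. psi (True, True) p10 s p20 t) p11 p21 ((1 - lam) * f (p11, p21))"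
proof -
  let ?C = "cumulative_mtr (True, True)"
  note psi = psi_11_cumulative[OF cont]
  note intros = has_mixed_partial_intros cont
  show "has_mixed_partial (\<lambda>s t. psi (True, True) s p11 t p21) p10 p20 (- lam * f (p10, p20))"
  proof (rule has_mixed_partial_transform_open[of "{0<..<p11}" "{0<..<p21}"])
    show "has_mixed_partial (\<lambda>s t. ?C p11 p21
        - lam * (?C p11 p21 - ?C s p21 - ?C p11 t + ?C s t)) p10 p20 (- lam * f (p10, p20))"
      apply (rule back_subst[where P = "has_mixed_partial _ p10 p20"])
      apply (rule intros | use p in linarith)+
      apply (simp add: f_def algebra_simps)
      done
  qed (use p in \<open>auto simp: psi\<close>)
  show "has_mixed_partial (\<lambda>s t. psi (True, True) s p11 p20 t) p10 p21 (lam * f (p10, p21))"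
  proof (rule has_mixed_partial_transform_open[of "{0<..<p11}" "{p20<..<1}"])
    show "has_mixed_partial (\<lambda>s t. ?C p11 t
        - lam * (?C p11 t - ?C s t - ?C p11 p20 + ?C s p20)) p10 p21 (lam * f (p10, p21))"
      apply (rule back_subst[where P = "has_mixed_partial _ p10 p21"])
      apply (rule intros | use p in linarith)+
      apply (simp add: f_def algebra_simps)
      done
  qed (use p in \<open>auto simp: psi\<close>)
  show "has_mixed_partial (\<lambda>s t. psi (True, True) p10 s t p21) p11 p20 (lam * f (p11, p20))"
  proof (rule has_mixed_partial_transform_open[of "{p10<..<1}" "{0<..<p21}"])
    show "has_mixed_partial (\<lambda>s t. ?C s p21
        - lam * (?C s p21 - ?C p10 p21 - ?C s t + ?C p10 t)) p11 p20 (lam * f (p11, p20))"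
      apply (rule back_subst[where P = "has_mixed_partial _ p11 p20"])
      apply (rule intros | use p in linarith)+
      apply (simp add: f_def algebra_simps)
      done
  qed (use p in \<open>auto simp: psi\<close>)
  show "has_mixed_partial (\<lambda>s t. psi (True, True) p10 s p20 t) p11 p21 ((1 - lam) * f (p11, p21))"
  proof (rule has_mixed_partial_transform_open[of "{p10<..<1}" "{p20<..<1}"])
    show "has_mixed_partial (\<lambda>s t. ?C s t
        - lam * (?C s t - ?C p10 t - ?C s p20 + ?C p10 p20)) p11 p21 ((1 - lam) * f (p11, p21))"
      apply (rule back_subst[where P = "has_mixed_partial _ p11 p21"])
      apply (rule intros | use p in linarith)+
      apply (simp add: f_def algebra_simps)
      done
  qed (use p in \<open>auto simp: psi\<close>)
qed

end

theorem theorem2: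
  fixes M :: "'a measure"
    and V :: "'a \<Rightarrow> real \<times> real"
    and eps :: "'a \<Rightarrow> real"
    and Y :: "bool \<times> bool \<Rightarrow> 'a \<Rightarrow> real"
    and Dsel :: "real \<Rightarrow> real \<Rightarrow> real \<Rightarrow> real \<Rightarrow> 'a \<Rightarrow> bool \<times> bool"
    and lam :: real
    and h :: "real \<times> real \<Rightarrow> real"
    and m :: "bool \<times> bool \<Rightarrow> real \<times> real \<Rightarrow> real"
    and psi :: "bool \<times> bool \<Rightarrow> real \<Rightarrow> real \<Rightarrow> real \<Rightarrow> real \<Rightarrow> real"
    and p10 p11 p20 p21 :: real
  assumes M: "prob_space M"
    and V_range: "\<And>\<omega>. \<omega> \<in> space M \<Longrightarrow> V \<omega> \<in> {0..1} \<times> {0..1}"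
    and h_nonneg: "\<And>v. 0 \<le> h v"
    and V_density: "distributed M lborel V (\<lambda>v. ennreal (h v))"
    and eps_unif: "distributed M lborel eps (\<lambda>e. indicator {0..1::real} e :: ennreal)"
    and eps_indep: "\<And>d. indep_rv M eps (\<lambda>\<omega>. (V \<omega>, Y d \<omega>))"
    and Y_int: "\<And>d. integrable M (Y d)"
    and lam: "0 \<le> lam" "lam \<le> 1"
    and D_meas: "\<And>q10 q11 q20 q21. Dsel q10 q11 q20 q21 \<in> M \<rightarrow>\<^sub>M count_space UNIV"
    and D_NE: "\<And>q10 q11 q20 q21 \<omega>. \<lbrakk>0 < q10; q10 < q11; q11 < 1; 0 < q20; q20 < q21; q21 < 1;
                 \<omega> \<in> space M\<rbrakk> \<Longrightarrow> is_pure_NE q10 q11 q20 q21 (V \<omega>) (Dsel q10 q11 q20 q21 \<omega>)"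
    and D_sel: "\<And>q10 q11 q20 q21 \<omega>. \<lbrakk>0 < q10; q10 < q11; q11 < 1; 0 < q20; q20 < q21; q21 < 1;
                 \<omega> \<in> space M\<rbrakk> \<Longrightarrow>
                 (Dsel q10 q11 q20 q21 \<omega> = (False, False) \<longleftrightarrow>
                    V \<omega> \<in> V_uni00 q10 q11 q20 q21 \<or>
                    (V \<omega> \<in> V_mul q10 q11 q20 q21 \<and> eps \<omega> \<le> lam))"
    and m_MTR: "\<And>d B. B \<in> sets borel \<Longrightarrow>
                 (\<integral>\<omega>. indicator B (V \<omega>) * Y d \<omega> \<partial>M) = (\<integral>v. indicator B v * (m d v * h v) \<partial>lborel)"
    and psi_def: "\<And>d q10 q11 q20 q21. \<lbrakk>0 < q10; q10 < q11; q11 < 1; 0 < q20; q20 < q21; q21 < 1\<rbrakk> \<Longrightarrow>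
                 psi d q10 q11 q20 q21 =
                   (\<integral>\<omega>. (if Dsel q10 q11 q20 q21 \<omega> = d then 1 else 0) *
                         (\<Sum>d'\<in>UNIV. (if Dsel q10 q11 q20 q21 \<omega> = d' then 1 else 0) * Y d' \<omega>) \<partial>M)"
    and m00_cont: "continuous_on ({0..1} \<times> {0..1}) (m (False, False))"
    and m11_cont: "continuous_on ({0..1} \<times> {0..1}) (m (True, True))"
    and h_cont: "continuous_on ({0..1} \<times> {0..1}) h"
    and p: "0 < p10" "p10 < p11" "p11 < 1" "0 < p20" "p20 < p21" "p21 < 1"
  shows
    "(\<exists>D. has_mixed_partial (\<lambda>s t. psi (False, False) s p11 t p21) p10 p20 D \<and>
        (lam > 0 \<longrightarrow> h (p10, p20) > 0 \<longrightarrow>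
           m (False, False) (p10, p20) = 1 / (lam * h (p10, p20)) * D)) \<and>
     (\<exists>D. has_mixed_partial (\<lambda>s t. psi (False, False) s p11 p20 t) p10 p21 D \<and>
        (lam < 1 \<longrightarrow> h (p10, p21) > 0 \<longrightarrow>
           m (False, False) (p10, p21) = 1 / ((1 - lam) * h (p10, p21)) * D)) \<and>
     (\<exists>D. has_mixed_partial (\<lambda>s t. psi (False, False) p10 s t p21) p11 p20 D \<and>
        (lam < 1 \<longrightarrow> h (p11, p20) > 0 \<longrightarrow>
           m (False, False) (p11, p20) = 1 / ((1 - lam) * h (p11, p20)) * D)) \<and>
     (\<exists>D. has_mixed_partial (\<lambda>s t. psi (False, False) p10 s p20 t) p11 p21 D \<and>
        (lam < 1 \<longrightarrow> h (p11, p21) > 0 \<longrightarrow>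
           m (False, False) (p11, p21) = - (1 / ((1 - lam) * h (p11, p21))) * D)) \<and>
     (\<exists>D. has_mixed_partial (\<lambda>s t. psi (True, True) s p11 t p21) p10 p20 D \<and>
        (lam > 0 \<longrightarrow> h (p10, p20) > 0 \<longrightarrow>
           m (True, True) (p10, p20) = - (1 / (lam * h (p10, p20))) * D)) \<and>
     (\<exists>D. has_mixed_partial (\<lambda>s t. psi (True, True) s p11 p20 t) p10 p21 D \<and>
        (lam > 0 \<longrightarrow> h (p10, p21) > 0 \<longrightarrow>
           m (True, True) (p10, p21) = 1 / (lam * h (p10, p21)) * D)) \<and>
     (\<exists>D. has_mixed_partial (\<lambda>s t. psi (True, True) p10 s t p21) p11 p20 D \<and>
        (lam > 0 \<longrightarrow> h (p11, p20) > 0 \<longrightarrow>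
           m (True, True) (p11, p20) = 1 / (lam * h (p11, p20)) * D)) \<and>
     (\<exists>D. has_mixed_partial (\<lambda>s t. psi (True, True) p10 s p20 t) p11 p21 D \<and>
        (lam < 1 \<longrightarrow> h (p11, p21) > 0 \<longrightarrow>
           m (True, True) (p11, p21) = 1 / ((1 - lam) * h (p11, p21)) * D))"
proof -
  interpret treatment_game M V eps Y Dsel lam h m psi
    using M V_range V_density eps_unif eps_indep Y_int lam D_meas D_NE D_sel m_MTR psi_def
    by (intro treatment_game.intro treatment_game_axioms.intro) auto
  note psi_00 = mixed_partials_psi_00[OF continuous_on_mult[OF m00_cont h_cont] p]
  note psi_11 = mixed_partials_psi_11[OF continuous_on_mult[OF m11_cont h_cont] p]
  from psi_00 psi_11 show ?thesis
    by - (intro conjI; rule exI, rule conjI, assumption, auto simp: field_simps)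
qed

end
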